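(* For every integer $k\ge1$ large enough, with $h=1/k$, the zero solution of the difference equation with variable delay $$\zeta_h(n+1)=\zeta_h(n)-\Big\{h-\frac{\cos((n+1)h)-\cos(nh)}{3}\Big\}\,\zeta_h\Big(n-\Big\lfloor\frac{|\cos(nh)|}{h}\Big\rfloor\Big),\qquad n\ge0,$$ (with initial values $\zeta_h(n)$ prescribed for $n=-k,\dots,0$) is uniformly asymptotically stable. Moreover, its solutions with $\zeta_h(n)=\varphi(nh)$, $n=-k,\dots,0$, approximate the solution of $x'(t)=-\big[1+\tfrac{\sin t}{3}\big]x(t-|\cos t|)$, $x=\varphi$ on $[-1,0]$, in the sense that $|x(t)-\zeta_h(\lfloor t/h\rfloor)|\to0$ as $h\to0$ for each $t>0$.
   Context: Here $\varphi\in C([-1,0],\mathbb R)$. The coefficient satisfies $\int_{nh}^{(n+1)h}\big(1+\tfrac{\sin s}{3}\big)ds=h-\frac{\cos((n+1)h)-\cos(nh)}{3}$, so the equation is the piecewise-constant-argument discretization of $x'(t)=-a(t)x(t-r(t))$ with $a(t)=1+\frac{\sin t}{3}$, $r(t)=|\cos t|$, $q=1$. Uniform asymptotic stability of the zero solution of a delay difference equation means uniform stability together with uniform attractivity with respect to the initial time. *)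

theory Defs
  imports "HOL-Analysis.Analysis"
begin

definition dcoef :: "real \<Rightarrow> int \<Rightarrow> real" where
  "dcoef h n = h - (cos ((real_of_int n + 1) * h) - cos (real_of_int n * h)) / 3"

definition ddelay :: "real \<Rightarrow> int \<Rightarrow> int" where
  "ddelay h n = \<lfloor>\<bar>cos (real_of_int n * h)\<bar> / h\<rfloor>"

definition dsol :: "nat \<Rightarrow> int \<Rightarrow> (int \<Rightarrow> real) \<Rightarrow> bool" where
  "dsol k n0 z \<longleftrightarrow>
     (\<forall>n\<ge>n0. z (n + 1) = z n - dcoef (1 / real k) n * z (n - ddelay (1 / real k) n))"

definition unif_stable :: "nat \<Rightarrow> bool" where
  "unif_stable k \<longleftrightarrow>
     (\<forall>\<epsilon>>0. \<exists>\<delta>>0. \<forall>n0\<ge>0. \<forall>z. dsol k n0 z \<and> (\<forall>j\<in>{n0 - int k..n0}. \<bar>z j\<bar> < \<delta>)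
        \<longrightarrow> (\<forall>n\<ge>n0. \<bar>z n\<bar> < \<epsilon>))"

definition unif_attractive :: "nat \<Rightarrow> bool" where
  "unif_attractive k \<longleftrightarrow>
     (\<exists>\<eta>>0. \<forall>\<epsilon>>0. \<exists>N::nat. \<forall>n0\<ge>0. \<forall>z. dsol k n0 z \<and> (\<forall>j\<in>{n0 - int k..n0}. \<bar>z j\<bar> < \<eta>)
        \<longrightarrow> (\<forall>n\<ge>n0 + int N. \<bar>z n\<bar> < \<epsilon>))"

definition unif_asymp_stable :: "nat \<Rightarrow> bool" where
  "unif_asymp_stable k \<longleftrightarrow> unif_stable k \<and> unif_attractive k"

definition dde_sol :: "(real \<Rightarrow> real) \<Rightarrow> (real \<Rightarrow> real) \<Rightarrow> bool" where
  "dde_sol \<phi> x \<longleftrightarrow> continuous_on {-1..} x \<and> (\<forall>t\<in>{-1..0}. x t = \<phi> t) \<and>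
     (\<forall>t\<ge>0. (x has_real_derivative (- (1 + sin t / 3) * x (t - \<bar>cos t\<bar>))) (at t within {0..}))"

end

theory Submission
  imports Defs
begin

text \<open>
  The discrete coefficients are increments a i = G (i + 1) - G i of an increasing function G whose
  increase over any delay window is at most L = 27/20 < sqrt 2, a discrete form of Yorke's condition.
  Let M bound |z| on the 5k + 1 steps before t.  If z stays positive on the last 3k steps, it is
  nonincreasing there and each step multiplies it by at most 1 - a_min, so z t <= (1 - a_min)^k M.
  If z changes sign at some m shortly before t, then -z j <= M (G (m + 1) - G j) for j <= m, and the
  quadratic deficit (max 0 (L - v))^2 / 2 of v = G j - G (m + 1) pays for the delayed feedback of
  these negative values, so z t <= (a_max + L^2/2) M.  Either way the sup norm contracts by a fixed
  factor below 1 over each block of 5k + 1 steps, which gives uniform asymptotic stability.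
  For the convergence, uniform continuity of x makes the local error of each step o(h), and a
  discrete Gronwall inequality accumulates these errors to o(1) up to time t.
\<close>

definition quad_deficit :: "real \<Rightarrow> real \<Rightarrow> real" where
  "quad_deficit L v = (max 0 (L - v))\<^sup>2 / 2"

lemma quad_deficit_antimono: "v \<le> w \<Longrightarrow> quad_deficit L w \<le> quad_deficit L v"
  unfolding quad_deficit_def by (auto intro!: power_mono simp: max_def)

lemma quad_deficit_nonneg: "0 \<le> quad_deficit L v"
  unfolding quad_deficit_def by simp

lemma quad_deficit_decrement:
  assumes "0 \<le> W" "0 \<le> b"
  shows "b * W \<le> quad_deficit L (L - W - b) - quad_deficit L (L - W)"
  using assms unfolding quad_deficit_def by (simp add: max_def power2_eq_square algebra_simps)

lemma geometric_bound_int: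
  fixes z :: "int \<Rightarrow> real"
  assumes step: "\<And>j. s \<le> j \<Longrightarrow> j < t \<Longrightarrow> z (j + 1) \<le> c * z j" and c: "0 \<le> c" and st: "s \<le> t"
  shows "z t \<le> c ^ nat (t - s) * z s"
proof -
  have "z j \<le> c ^ nat (j - s) * z s" if "s \<le> j" "j \<le> t" for j
    using that
  proof (induction j rule: int_ge_induct)
    case (step j)
    have "z (j + 1) \<le> c * z j" using step by (intro assms(1)) auto
    also have "\<dots> \<le> c * (c ^ nat (j - s) * z s)"
      using step c by (intro mult_left_mono) auto
    also have "\<dots> = c ^ nat (j + 1 - s) * z s"
    proof -
      have "nat (j + 1 - s) = Suc (nat (j - s))" using step.hyps by simp
      then show ?thesis by simp
    qed
    finally show ?case .
  qed simp
  then show ?thesis using st by simp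
qed

locale delay_recurrence =
  fixes a :: "int \<Rightarrow> real" and d :: "int \<Rightarrow> int" and G :: "int \<Rightarrow> real"
    and k :: nat and a_min a_max L :: real
  assumes a_eq_diff: "\<And>i. a i = G (i + 1) - G i"
    and a_min_le: "\<And>i. a_min \<le> a i" and a_le_max: "\<And>i. a i \<le> a_max"
    and a_min_nonneg: "0 \<le> a_min" and a_min_le_1: "a_min \<le> 1"
    and delay_nonneg: "\<And>i. 0 \<le> d i" and delay_le: "\<And>i. d i \<le> int k"
    and window_le: "\<And>i. G (i + 1) - G (i - d i) \<le> L"
    and k_pos: "1 \<le> k"
begin

definition solves_from :: "int \<Rightarrow> (int \<Rightarrow> real) \<Rightarrow> bool" where
  "solves_from n0 z \<longleftrightarrow> (\<forall>i\<ge>n0. z (i + 1) = z i - a i * z (i - d i))"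

definition contraction_rate :: real where
  "contraction_rate = max (a_max + L\<^sup>2 / 2) ((1 - a_min) ^ k)"

lemma a_nonneg: "0 \<le> a i"
  using a_min_le[of i] a_min_nonneg by linarith

lemma G_mono: "i \<le> j \<Longrightarrow> G i \<le> G j"
proof (induction j rule: int_ge_induct)
  case (step j)
  then show ?case using a_eq_diff[of j] a_nonneg[of j] by linarith
qed simp

lemma L_nonneg: "0 \<le> L"
  using window_le[of 0] G_mono[of "- d 0" 1] delay_nonneg[of 0] by simp

lemma contraction_rate_nonneg: "0 \<le> contraction_rate"
proof -
  have "0 \<le> a_max + L\<^sup>2 / 2" using a_nonneg[of 0] a_le_max[of 0] by simp
  then show ?thesis unfolding contraction_rate_def by simp
qed

lemma solves_from_uminus: "solves_from n0 z \<Longrightarrow> solves_from n0 (\<lambda>i. - z i)"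
  unfolding solves_from_def by simp

lemma solves_from_mono: "solves_from n0 z \<Longrightarrow> n0 \<le> n1 \<Longrightarrow> solves_from n1 z"
  unfolding solves_from_def by simp

lemma step_bound:
  assumes "solves_from n0 z" "n0 \<le> i" "\<bar>z (i - d i)\<bar> \<le> M"
  shows "\<bar>z (i + 1) - z i\<bar> \<le> a i * M"
proof -
  have "z (i + 1) - z i = - (a i * z (i - d i))"
    using assms(1,2) unfolding solves_from_def by simp
  then have "\<bar>z (i + 1) - z i\<bar> = a i * \<bar>z (i - d i)\<bar>"
    by (simp add: abs_mult a_nonneg)
  also have "\<dots> \<le> a i * M"
    using assms(3) a_nonneg by (rule mult_left_mono)
  finally show ?thesis .
qed

text \<open>
  From here on, t is a time at which the recurrence has been in force for 4k+1 steps and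
  M bounds z on the 5k+1 preceding steps; every delayed argument met below stays in that window.
\<close>

lemma nonincreasing_on_positive_stretch:
  assumes rec: "solves_from (t - 4 * int k - 1) z"
    and pos: "\<And>j. t - 3 * int k \<le> j \<Longrightarrow> j \<le> t \<Longrightarrow> 0 < z j"
    and ij: "t - 2 * int k \<le> i" "i \<le> j" "j \<le> t"
  shows "z j \<le> z i"
  using ij(2,3)
proof (induction j rule: int_ge_induct)
  case (step j)
  have "z (j + 1) = z j - a j * z (j - d j)"
    using rec ij(1) step.hyps unfolding solves_from_def by simp
  moreover have "0 < z (j - d j)"
    using pos delay_le[of j] delay_nonneg[of j] ij(1) step by simp
  ultimately have "z (j + 1) \<le> z j" using a_nonneg[of j] by simp
  then show ?case using step by simp
qed simp

lemma decay_on_positive_stretch: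
  assumes rec: "solves_from (t - 4 * int k - 1) z"
    and bnd: "\<And>i. t - 5 * int k - 1 \<le> i \<Longrightarrow> i \<le> t - 1 \<Longrightarrow> \<bar>z i\<bar> \<le> M"
    and pos: "\<And>j. t - 3 * int k \<le> j \<Longrightarrow> j \<le> t \<Longrightarrow> 0 < z j"
  shows "z t \<le> (1 - a_min) ^ k * M"
proof -
  have "z (j + 1) \<le> (1 - a_min) * z j" if "t - int k \<le> j" "j < t" for j
  proof -
    have "z j \<le> z (j - d j)"
      using nonincreasing_on_positive_stretch[OF rec pos] delay_le[of j] delay_nonneg[of j] that
      by simp
    then have "a j * z j \<le> a j * z (j - d j)"
      using a_nonneg by (rule mult_left_mono)
    moreover have "a_min * z j \<le> a j * z j"
      using a_min_le[of j] pos[of j] that k_pos by (intro mult_right_mono) auto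
    moreover have "z (j + 1) = z j - a j * z (j - d j)"
      using rec that k_pos unfolding solves_from_def by simp
    ultimately show ?thesis by (simp add: algebra_simps)
  qed
  then have "z t \<le> (1 - a_min) ^ nat (t - (t - int k)) * z (t - int k)"
    using a_min_le_1 by (intro geometric_bound_int) auto
  also have "\<dots> = (1 - a_min) ^ k * z (t - int k)" by simp
  also have "\<dots> \<le> (1 - a_min) ^ k * M"
    using bnd[of "t - int k"] k_pos a_min_le_1 by (intro mult_left_mono) auto
  finally show ?thesis .
qed

lemma negative_part_before_sign_change:
  assumes rec: "solves_from (t - 4 * int k - 1) z"
    and bnd: "\<And>i. t - 5 * int k - 1 \<le> i \<Longrightarrow> i \<le> t - 1 \<Longrightarrow> \<bar>z i\<bar> \<le> M"
    and m: "t - 3 * int k \<le> m" "m \<le> t - 1" and pos: "0 < z (m + 1)"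
    and j: "m - int k \<le> j" "j \<le> m + 1"
  shows "- z j \<le> M * (G (m + 1) - G j)"
  using j(2,1)
proof (induction j rule: int_le_induct)
  case base
  then show ?case using pos by simp
next
  case (step j)
  have "\<bar>z (j - 1 + 1) - z (j - 1)\<bar> \<le> a (j - 1) * M"
    using step m delay_le[of "j - 1"] delay_nonneg[of "j - 1"]
    by (intro step_bound[OF rec] bnd) auto
  then have "- z (j - 1) \<le> - z j + M * (G j - G (j - 1))"
    using a_eq_diff[of "j - 1"] by (simp add: algebra_simps)
  then show ?case using step by (simp add: algebra_simps)
qed

lemma feedback_before_sign_change:
  assumes rec: "solves_from (t - 4 * int k - 1) z"
    and bnd: "\<And>i. t - 5 * int k - 1 \<le> i \<Longrightarrow> i \<le> t - 1 \<Longrightarrow> \<bar>z i\<bar> \<le> M"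
    and m: "t - 3 * int k \<le> m" "m \<le> t - 1" and pos: "0 < z (m + 1)"
    and j: "m + 1 \<le> j" and q: "j - d j \<le> m"
  shows "a j * (- z (j - d j))
    \<le> M * (quad_deficit L (G j - G (m + 1)) - quad_deficit L (G (j + 1) - G (m + 1)))"
proof -
  define q where "q = j - d j"
  define W where "W = L - (G (j + 1) - G (m + 1))"
  have M0: "0 \<le> M" using bnd[of "t - 1"] k_pos by force
  have "G (m + 1) - G q \<le> W"
    using window_le[of j] unfolding W_def q_def by simp
  moreover have "0 \<le> G (m + 1) - G q" using G_mono[of q "m + 1"] q unfolding q_def by simp
  moreover have "- z q \<le> M * (G (m + 1) - G q)"
    using negative_part_before_sign_change[OF rec bnd m pos] q j delay_le[of j] unfolding q_def by simp
  ultimately have W0: "0 \<le> W" and "- z q \<le> M * W"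
    using mult_left_mono[OF _ M0] by (smt (verit))+
  then have "a j * (- z q) \<le> M * (a j * W)"
    using mult_left_mono[OF _ a_nonneg[of j], of "- z q" "M * W"] by (simp add: ac_simps)
  also have "\<dots> \<le> M * (quad_deficit L (G j - G (m + 1)) - quad_deficit L (G (j + 1) - G (m + 1)))"
  proof -
    have "L - W - a j = G j - G (m + 1)" "L - W = G (j + 1) - G (m + 1)"
      using a_eq_diff[of j] unfolding W_def by simp_all
    then have "a j * W \<le> quad_deficit L (G j - G (m + 1)) - quad_deficit L (G (j + 1) - G (m + 1))"
      using quad_deficit_decrement[OF W0 a_nonneg[of j], of L] by metis
    then show ?thesis using M0 by (rule mult_left_mono)
  qed
  finally show ?thesis unfolding q_def .
qed

lemma positive_part_after_sign_change:
  assumes rec: "solves_from (t - 4 * int k - 1) z"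
    and bnd: "\<And>i. t - 5 * int k - 1 \<le> i \<Longrightarrow> i \<le> t - 1 \<Longrightarrow> \<bar>z i\<bar> \<le> M"
    and m: "t - 3 * int k \<le> m" "m \<le> t - 1" and nonpos: "z m \<le> 0"
    and pos: "\<And>j. m < j \<Longrightarrow> j \<le> t \<Longrightarrow> 0 < z j"
  shows "z t \<le> (a_max + L\<^sup>2 / 2) * M"
proof -
  have M0: "0 \<le> M" using bnd[of "t - 1"] k_pos by force
  have "z j \<le> M * (a m + L\<^sup>2 / 2 - quad_deficit L (G j - G (m + 1)))" if "m + 1 \<le> j" "j \<le> t" for j
    using that
  proof (induction j rule: int_ge_induct)
    case base
    have "\<bar>z (m + 1) - z m\<bar> \<le> a m * M"
      using m delay_le[of m] delay_nonneg[of m] by (intro step_bound[OF rec] bnd) auto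
    then have "z (m + 1) \<le> a m * M" using nonpos by (simp add: abs_le_iff)
    moreover have qd0: "quad_deficit L 0 = L\<^sup>2 / 2" using L_nonneg by (simp add: quad_deficit_def)
    ultimately show ?case by (simp add: qd0 algebra_simps)
  next
    case (step j)
    have eq: "z (j + 1) = z j - a j * z (j - d j)"
      using rec step m unfolding solves_from_def by simp
    show ?case
    proof (cases "m + 1 \<le> j - d j")
      case True
      then have "0 \<le> a j * z (j - d j)"
        using pos[of "j - d j"] delay_nonneg[of j] step a_nonneg[of j] by simp
      moreover have "quad_deficit L (G (j + 1) - G (m + 1)) \<le> quad_deficit L (G j - G (m + 1))"
        using quad_deficit_antimono G_mono[of j "j + 1"] by simp
      ultimately show ?thesis
        using step eq mult_left_mono[OF _ M0] by (smt (verit))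
    next
      case False
      then show ?thesis
        using feedback_before_sign_change[OF rec bnd m pos[of "m + 1"], of j] step eq m
        by (simp add: algebra_simps)
    qed
  qed
  from this[of t] m have "z t \<le> M * (a m + L\<^sup>2 / 2 - quad_deficit L (G t - G (m + 1)))"
    by simp
  also have "\<dots> \<le> M * (a_max + L\<^sup>2 / 2)"
    using quad_deficit_nonneg[of L "G t - G (m + 1)"] a_le_max[of m] M0 by (intro mult_left_mono) simp_all
  finally show ?thesis by (simp add: mult.commute)
qed

lemma solution_le_contraction:
  assumes rec: "solves_from (t - 4 * int k - 1) z"
    and bnd: "\<And>i. t - 5 * int k - 1 \<le> i \<Longrightarrow> i \<le> t - 1 \<Longrightarrow> \<bar>z i\<bar> \<le> M"
    and pos: "0 < z t"
  shows "z t \<le> contraction_rate * M"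
proof -
  have M0: "0 \<le> M" using bnd[of "t - 1"] k_pos by force
  show ?thesis
  proof (cases "\<forall>j\<in>{t - 3 * int k..t}. 0 < z j")
    case True
    then have "z t \<le> (1 - a_min) ^ k * M"
      by (intro decay_on_positive_stretch[OF rec bnd]) auto
    also have "\<dots> \<le> contraction_rate * M"
      unfolding contraction_rate_def using M0 by (intro mult_right_mono) auto
    finally show ?thesis .
  next
    case False
    define S where "S = {j \<in> {t - 3 * int k..t}. z j \<le> 0}"
    have "finite S" unfolding S_def by (rule finite_subset[of _ "{t - 3 * int k..t}"]) auto
    moreover have "S \<noteq> {}" using False unfolding S_def by auto
    ultimately have "Max S \<in> S" and above: "\<And>j. j \<in> S \<Longrightarrow> j \<le> Max S" by simp_all
    then have m: "t - 3 * int k \<le> Max S" "Max S \<le> t - 1" "z (Max S) \<le> 0"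
      using pos unfolding S_def by (auto simp: order.order_iff_strict)
    have "0 < z j" if "Max S < j" "j \<le> t" for j
      using above[of j] that m unfolding S_def by force
    then have "z t \<le> (a_max + L\<^sup>2 / 2) * M"
      using positive_part_after_sign_change[OF rec bnd m] by blast
    also have "\<dots> \<le> contraction_rate * M"
      unfolding contraction_rate_def using M0 by (intro mult_right_mono) auto
    finally show ?thesis .
  qed
qed

lemma abs_solution_le_contraction:
  assumes rec: "solves_from (t - 4 * int k - 1) z"
    and bnd: "\<And>i. t - 5 * int k - 1 \<le> i \<Longrightarrow> i \<le> t - 1 \<Longrightarrow> \<bar>z i\<bar> \<le> M"
  shows "\<bar>z t\<bar> \<le> contraction_rate * M"
proof -
  have M0: "0 \<le> M" using bnd[of "t - 1"] k_pos by force
  consider "0 < z t" | "0 < - z t" | "z t = 0" by linarith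
  then show ?thesis
  proof cases
    case 1
    then show ?thesis using solution_le_contraction[OF rec bnd] by simp
  next
    case 2
    then show ?thesis using solution_le_contraction[OF solves_from_uminus[OF rec], of M] bnd by simp
  next
    case 3
    then show ?thesis using contraction_rate_nonneg M0 by simp
  qed
qed

lemma initial_growth_bound:
  assumes rec: "solves_from n0 z" and init: "\<And>i. n0 - int k \<le> i \<Longrightarrow> i \<le> n0 \<Longrightarrow> \<bar>z i\<bar> \<le> \<delta>"
  shows "n0 - int k \<le> i \<Longrightarrow> i \<le> n0 + int q \<Longrightarrow> \<bar>z i\<bar> \<le> (1 + a_max) ^ q * \<delta>"
proof (induction q arbitrary: i)
  case 0
  then show ?case using init by simp
next
  case (Suc q)
  have growth: "1 \<le> 1 + a_max" "0 \<le> \<delta>"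
    using a_nonneg[of 0] a_le_max[of 0] init[of n0] k_pos by force+
  show ?case
  proof (cases "i \<le> n0 + int q")
    case True
    then have "\<bar>z i\<bar> \<le> (1 + a_max) ^ q * \<delta>" using Suc by simp
    also have "\<dots> \<le> (1 + a_max) ^ Suc q * \<delta>"
      using growth by (intro mult_right_mono power_increasing) auto
    finally show ?thesis .
  next
    case False
    define j where "j = n0 + int q"
    have i: "i = j + 1" using False Suc.prems unfolding j_def by simp
    have zj: "\<bar>z j\<bar> \<le> (1 + a_max) ^ q * \<delta>" using Suc.IH[of j] k_pos unfolding j_def by simp
    have "\<bar>z (j + 1) - z j\<bar> \<le> a j * ((1 + a_max) ^ q * \<delta>)"
      using Suc.IH[of "j - d j"] delay_nonneg[of j] delay_le[of j]
      by (intro step_bound[OF rec]) (simp_all add: j_def)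
    also have "\<dots> \<le> a_max * ((1 + a_max) ^ q * \<delta>)"
      using a_le_max[of j] growth by (intro mult_right_mono) simp_all
    finally have "\<bar>z (j + 1)\<bar> \<le> (1 + a_max) ^ q * \<delta> + a_max * ((1 + a_max) ^ q * \<delta>)"
      using zj by linarith
    then show ?thesis unfolding i by (simp add: algebra_simps)
  qed
qed

lemma bound_persists:
  assumes rate: "contraction_rate \<le> 1" and rec: "solves_from (s + int k) z"
    and bnd: "\<And>i. s \<le> i \<Longrightarrow> i \<le> s + 5 * int k \<Longrightarrow> \<bar>z i\<bar> \<le> M"
    and i: "s \<le> i"
  shows "\<bar>z i\<bar> \<le> M"
proof -
  have M0: "0 \<le> M" using bnd[of s] by force
  have "\<forall>j. s \<le> j \<and> j \<le> n \<longrightarrow> \<bar>z j\<bar> \<le> M" if "s + 5 * int k \<le> n" for n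
    using that
  proof (induction n rule: int_ge_induct)
    case base
    then show ?case using bnd by simp
  next
    case (step n)
    have "\<bar>z (n + 1)\<bar> \<le> contraction_rate * M"
      using step by (intro abs_solution_le_contraction solves_from_mono[OF rec]) auto
    also have "\<dots> \<le> M" using mult_right_mono[OF rate M0] by simp
    finally show ?case using step by (auto simp: order.order_iff_strict zless_add1_eq)
  qed
  then show ?thesis using i by (metis max.cobounded1 max.cobounded2)
qed

lemma geometric_decay:
  assumes rate: "contraction_rate \<le> 1" and rec: "solves_from (s + int k) z"
    and bnd: "\<And>i. s \<le> i \<Longrightarrow> i \<le> s + 5 * int k \<Longrightarrow> \<bar>z i\<bar> \<le> M"
  shows "s + int p * (5 * int k + 1) \<le> i \<Longrightarrow> \<bar>z i\<bar> \<le> contraction_rate ^ p * M"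
proof (induction p arbitrary: i)
  case 0
  then show ?case using bound_persists[OF rate rec bnd] by simp
next
  case (Suc p)
  have "s + int p * (5 * int k + 1) + 5 * int k + 1 \<le> i"
    using Suc.prems by (simp add: algebra_simps)
  moreover have "0 \<le> int p * (5 * int k + 1)" by simp
  ultimately have "\<bar>z i\<bar> \<le> contraction_rate * (contraction_rate ^ p * M)"
    by (intro abs_solution_le_contraction solves_from_mono[OF rec] Suc.IH) linarith+
  then show ?case by simp
qed

lemma solution_decay:
  assumes rate: "contraction_rate \<le> 1" and rec: "solves_from n0 z"
    and init: "\<And>i. n0 - int k \<le> i \<Longrightarrow> i \<le> n0 \<Longrightarrow> \<bar>z i\<bar> \<le> \<delta>"
    and i: "n0 - int k + int p * (5 * int k + 1) \<le> i"
  shows "\<bar>z i\<bar> \<le> contraction_rate ^ p * ((1 + a_max) ^ (4 * k) * \<delta>)"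
  using rec initial_growth_bound[OF rec init] i
  by (intro geometric_decay[OF rate, of "n0 - int k"]) auto

end

lemma abs_cos_diff_le: "\<bar>cos x - cos y\<bar> \<le> \<bar>x - y :: real\<bar>"
proof -
  have "norm (cos x - cos y) \<le> 1 * norm (x - y)"
    using field_differentiable_bound[of UNIV cos "\<lambda>z. - sin z" 1 x y]
    by (auto intro!: derivative_eq_intros)
  then show ?thesis by simp
qed

definition coef_antideriv :: "real \<Rightarrow> real" where
  "coef_antideriv s = s - cos s / 3"

lemma coef_antideriv_diff_bounds:
  assumes "u \<le> v"
  shows "2 / 3 * (v - u) \<le> coef_antideriv v - coef_antideriv u"
    and "coef_antideriv v - coef_antideriv u \<le> 4 / 3 * (v - u)"
  using abs_cos_diff_le[of v u] assms unfolding coef_antideriv_def by (simp_all add: abs_le_iff)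

lemma dcoef_eq_antideriv_diff:
  "dcoef h n = coef_antideriv ((real_of_int n + 1) * h) - coef_antideriv (real_of_int n * h)"
  unfolding dcoef_def coef_antideriv_def by (simp add: algebra_simps diff_divide_distrib)

lemma dcoef_bounds:
  assumes "0 \<le> h"
  shows "2 / 3 * h \<le> dcoef h n" and "dcoef h n \<le> 4 / 3 * h"
  using coef_antideriv_diff_bounds[of "real_of_int n * h" "(real_of_int n + 1) * h"] assms
  unfolding dcoef_eq_antideriv_diff by (simp_all add: algebra_simps)

lemma ddelay_bounds:
  assumes "0 < h"
  shows "0 \<le> ddelay h n"
    and "real_of_int (ddelay h n) * h \<le> \<bar>cos (real_of_int n * h)\<bar>"
    and "\<bar>cos (real_of_int n * h)\<bar> - h < real_of_int (ddelay h n) * h"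
proof -
  define c where "c = \<bar>cos (real_of_int n * h)\<bar> / h"
  have "ddelay h n = \<lfloor>c\<rfloor>" unfolding ddelay_def c_def ..
  moreover have "0 \<le> c" "c * h = \<bar>cos (real_of_int n * h)\<bar>"
    using assms unfolding c_def by simp_all
  moreover have "real_of_int \<lfloor>c\<rfloor> * h \<le> c * h" "c * h < (real_of_int \<lfloor>c\<rfloor> + 1) * h"
    using assms by (intro mult_right_mono mult_strict_right_mono; simp)+
  ultimately show "0 \<le> ddelay h n"
    and "real_of_int (ddelay h n) * h \<le> \<bar>cos (real_of_int n * h)\<bar>"
    and "\<bar>cos (real_of_int n * h)\<bar> - h < real_of_int (ddelay h n) * h"
    by (simp_all add: algebra_simps)
qed

lemma ddelay_le_steps:
  assumes "1 \<le> k"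
  shows "ddelay (1 / real k) n \<le> int k"
proof -
  have "0 < 1 / real k" using assms by simp
  then have "real_of_int (ddelay (1 / real k) n) * (1 / real k) \<le> 1"
    using ddelay_bounds(2) abs_cos_le_one order_trans by blast
  then have "real_of_int (ddelay (1 / real k) n) \<le> real k"
    using assms by (simp add: divide_le_eq)
  then show ?thesis by linarith
qed

lemma one_minus_pow_mult_le_one:
  fixes x :: real
  assumes "0 \<le> x" "x \<le> 1"
  shows "(1 - x) ^ k * (1 + real k * x) \<le> 1"
proof -
  have "(1 - x) ^ k * (1 + real k * x) \<le> (1 - x) ^ k * (1 + x) ^ k"
    using Bernoulli_inequality[of x k] assms by (intro mult_left_mono) auto
  also have "\<dots> = (1 - x\<^sup>2) ^ k"
    by (simp add: power_mult_distrib[symmetric] power2_eq_square algebra_simps)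
  also have "\<dots> \<le> 1"
    using assms by (intro power_le_one) (auto simp: power_le_one)
  finally show ?thesis .
qed

lemma delay_recurrence_discretization:
  assumes "80 \<le> k"
  shows "delay_recurrence (dcoef (1 / real k)) (ddelay (1 / real k))
    (\<lambda>i. coef_antideriv (real_of_int i / real k)) k (2 / (3 * real k)) (4 / (3 * real k)) (27 / 20)"
proof unfold_locales
  fix i
  let ?h = "1 / real k" and ?d = "ddelay (1 / real k) i"
  show "dcoef ?h i = coef_antideriv (real_of_int (i + 1) / real k) - coef_antideriv (real_of_int i / real k)"
    unfolding dcoef_eq_antideriv_diff by simp
  show "2 / (3 * real k) \<le> dcoef ?h i" "dcoef ?h i \<le> 4 / (3 * real k)"
    using dcoef_bounds[of ?h i] by simp_all
  show "0 \<le> ?d" using assms by (simp add: ddelay_bounds)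
  show "?d \<le> int k" using assms by (simp add: ddelay_le_steps)
  have "real_of_int ?d \<le> real k" using \<open>?d \<le> int k\<close> by linarith
  then have "coef_antideriv (real_of_int (i + 1) / real k) - coef_antideriv (real_of_int (i - ?d) / real k)
      \<le> 4 / 3 * ((real_of_int ?d + 1) / real k)"
    using coef_antideriv_diff_bounds(2)[of "real_of_int (i - ?d) / real k" "real_of_int (i + 1) / real k"]
      \<open>0 \<le> ?d\<close> by (simp add: divide_right_mono diff_divide_distrib[symmetric] algebra_simps)
  also have "\<dots> \<le> 4 / 3 * ((real k + 1) / real k)"
    using \<open>real_of_int ?d \<le> real k\<close> by (simp add: divide_right_mono)
  also have "\<dots> \<le> 27 / 20" using assms by (simp add: field_simps)
  finally show "coef_antideriv (real_of_int (i + 1) / real k) - coef_antideriv (real_of_int (i - ?d) / real k) \<le> 27 / 20" .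
qed (use assms in \<open>simp_all add: field_simps\<close>)

lemma discretization_geometric_decay:
  assumes k: "100 \<le> k" and sol: "dsol k n0 z" and init: "\<forall>j\<in>{n0 - int k..n0}. \<bar>z j\<bar> < \<delta>"
    and i: "n0 + int p * (5 * int k + 1) \<le> i"
  shows "\<bar>z i\<bar> \<le> (19 / 20) ^ p * ((1 + 4 / (3 * real k)) ^ (4 * k) * \<delta>)"
proof -
  interpret delay_recurrence "dcoef (1 / real k)" "ddelay (1 / real k)"
    "\<lambda>i. coef_antideriv (real_of_int i / real k)" k "2 / (3 * real k)" "4 / (3 * real k)" "27 / 20"
    using k by (intro delay_recurrence_discretization) simp
  have "(1 - 2 / (3 * real k)) ^ k * (1 + 2 / 3) \<le> 1"
    using one_minus_pow_mult_le_one[of "2 / (3 * real k)" k] k by simp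
  then have "(1 - 2 / (3 * real k)) ^ k \<le> 19 / 20" by simp
  moreover have "4 / (3 * real k) + (27 / 20)\<^sup>2 / 2 \<le> 19 / 20"
    using k by (simp add: field_simps power2_eq_square)
  ultimately have rate: "contraction_rate \<le> 19 / 20"
    unfolding contraction_rate_def by (simp only: max.bounded_iff)
  have "solves_from n0 z" using sol unfolding dsol_def solves_from_def by simp
  then have "\<bar>z i\<bar> \<le> contraction_rate ^ p * ((1 + 4 / (3 * real k)) ^ (4 * k) * \<delta>)"
    using rate init i by (intro solution_decay) force+
  also have "\<dots> \<le> (19 / 20) ^ p * ((1 + 4 / (3 * real k)) ^ (4 * k) * \<delta>)"
    using rate contraction_rate_nonneg init[rule_format, of n0]
    by (intro mult_right_mono power_mono) auto
  finally show ?thesis .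
qed

lemma unif_asymp_stable_of_geometric_decay:
  assumes decay: "\<And>n0 z \<delta> p i. dsol k n0 z \<Longrightarrow> \<forall>j\<in>{n0 - int k..n0}. \<bar>z j\<bar> < \<delta> \<Longrightarrow>
      n0 + int p * int T \<le> i \<Longrightarrow> \<bar>z i\<bar> \<le> \<rho> ^ p * (C * \<delta>)"
    and \<rho>: "0 \<le> \<rho>" "\<rho> < 1" and C: "0 < C"
  shows "unif_asymp_stable k"
  unfolding unif_asymp_stable_def unif_stable_def unif_attractive_def
proof (intro conjI allI impI)
  fix \<epsilon> :: real assume \<epsilon>: "0 < \<epsilon>"
  show "\<exists>\<delta>>0. \<forall>n0\<ge>0. \<forall>z. dsol k n0 z \<and> (\<forall>j\<in>{n0 - int k..n0}. \<bar>z j\<bar> < \<delta>) \<longrightarrow> (\<forall>n\<ge>n0. \<bar>z n\<bar> < \<epsilon>)"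
  proof (intro exI[of _ "\<epsilon> / (2 * C)"] conjI allI impI)
    fix n0 z n
    assume "0 \<le> n0" "dsol k n0 z \<and> (\<forall>j\<in>{n0 - int k..n0}. \<bar>z j\<bar> < \<epsilon> / (2 * C))" "n0 \<le> n"
    then have "\<bar>z n\<bar> \<le> \<rho> ^ 0 * (C * (\<epsilon> / (2 * C)))" by (intro decay) auto
    then show "\<bar>z n\<bar> < \<epsilon>" using \<epsilon> C by simp
  qed (use \<epsilon> C in simp)
next
  show "\<exists>\<eta>>0. \<forall>\<epsilon>>0. \<exists>N. \<forall>n0\<ge>0. \<forall>z. dsol k n0 z \<and> (\<forall>j\<in>{n0 - int k..n0}. \<bar>z j\<bar> < \<eta>) \<longrightarrow>
      (\<forall>n\<ge>n0 + int N. \<bar>z n\<bar> < \<epsilon>)"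
  proof (intro exI[of _ "1::real"] conjI allI impI)
    fix \<epsilon> :: real assume \<epsilon>: "0 < \<epsilon>"
    obtain p where p: "\<rho> ^ p < \<epsilon> / C"
      using real_arch_pow_inv[of "\<epsilon> / C" \<rho>] \<epsilon> \<rho> C by fastforce
    show "\<exists>N. \<forall>n0\<ge>0. \<forall>z. dsol k n0 z \<and> (\<forall>j\<in>{n0 - int k..n0}. \<bar>z j\<bar> < 1) \<longrightarrow>
        (\<forall>n\<ge>n0 + int N. \<bar>z n\<bar> < \<epsilon>)"
    proof (intro exI[of _ "p * T"] allI impI)
      fix n0 z n
      assume "0 \<le> n0" "dsol k n0 z \<and> (\<forall>j\<in>{n0 - int k..n0}. \<bar>z j\<bar> < 1)" "n0 + int (p * T) \<le> n"
      then have "\<bar>z n\<bar> \<le> \<rho> ^ p * (C * 1)" by (intro decay) auto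
      then show "\<bar>z n\<bar> < \<epsilon>" using p C by (simp add: field_simps)
    qed
  qed simp
qed

lemma unif_asymp_stable_discretization:
  assumes "100 \<le> k"
  shows "unif_asymp_stable k"
proof (rule unif_asymp_stable_of_geometric_decay)
  fix n0 z \<delta> p i
  assume "dsol k n0 z" "\<forall>j\<in>{n0 - int k..n0}. \<bar>z j\<bar> < \<delta>" "n0 + int p * int (5 * k + 1) \<le> i"
  then show "\<bar>z i\<bar> \<le> (19 / 20) ^ p * ((1 + 4 / (3 * real k)) ^ (4 * k) * \<delta>)"
    using assms by (intro discretization_geometric_decay) (auto simp: algebra_simps)
qed (auto intro!: zero_less_power add_pos_nonneg)

lemma dde_increment_estimate:
  assumes sol: "dde_sol \<phi> x" and ab: "0 \<le> a" "a \<le> b"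
    and close: "\<And>s. a \<le> s \<Longrightarrow> s \<le> b \<Longrightarrow> \<bar>x (s - \<bar>cos s\<bar>) - c\<bar> \<le> \<omega>"
  shows "\<bar>x b - x a + c * (coef_antideriv b - coef_antideriv a)\<bar> \<le> 4 / 3 * \<omega> * (b - a)"
proof -
  define f where "f s = x s + c * coef_antideriv s" for s
  define f' where "f' s = (1 + sin s / 3) * (c - x (s - \<bar>cos s\<bar>))" for s
  have dx: "\<forall>s\<ge>0. (x has_real_derivative - (1 + sin s / 3) * x (s - \<bar>cos s\<bar>)) (at s within {0..})"
    using sol unfolding dde_sol_def by blast
  have df: "(f has_field_derivative f' s) (at s within {a..b})" if "s \<in> {a..b}" for s
  proof -
    have "(x has_real_derivative - (1 + sin s / 3) * x (s - \<bar>cos s\<bar>)) (at s within {a..b})"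
      using that ab by (intro DERIV_subset[OF dx[rule_format]]) auto
    then show ?thesis
      unfolding f_def f'_def coef_antideriv_def
      by (auto intro!: derivative_eq_intros simp: algebra_simps)
  qed
  have bound: "norm (f' s) \<le> 4 / 3 * \<omega>" if "s \<in> {a..b}" for s
  proof -
    have "\<bar>1 + sin s / 3\<bar> \<le> 4 / 3"
      using sin_le_one[of s] sin_ge_minus_one[of s] unfolding abs_le_iff by linarith
    moreover have "\<bar>c - x (s - \<bar>cos s\<bar>)\<bar> \<le> \<omega>"
      using close that by (simp add: abs_minus_commute)
    ultimately show ?thesis
      unfolding f'_def real_norm_def abs_mult by (intro mult_mono) auto
  qed
  have "norm (f b - f a) \<le> 4 / 3 * \<omega> * norm (b - a)"
    using field_differentiable_bound[OF convex_real_interval(5) df bound, of b a] ab by simp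
  then show ?thesis using ab unfolding f_def by (simp add: algebra_simps)
qed

lemma delayed_argument_close:
  assumes h: "0 < h" and s: "real_of_int n * h \<le> s" "s \<le> (real_of_int n + 1) * h"
  shows "\<bar>(s - \<bar>cos s\<bar>) - real_of_int (n - ddelay h n) * h\<bar> \<le> 2 * h"
proof -
  have "\<bar>\<bar>cos s\<bar> - \<bar>cos (real_of_int n * h)\<bar>\<bar> \<le> h"
    using abs_cos_diff_le[of s "real_of_int n * h"] s by (simp add: algebra_simps)
  moreover have "real_of_int (n - ddelay h n) * h = real_of_int n * h - real_of_int (ddelay h n) * h"
    by (simp add: algebra_simps)
  moreover have "s \<le> real_of_int n * h + h" using s by (simp add: algebra_simps)
  ultimately show ?thesis
    using ddelay_bounds(2,3)[OF h, of n] s(1) unfolding abs_le_iff by linarith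
qed

lemma dde_one_step_residual:
  assumes sol: "dde_sol \<phi> x" and h: "0 < h" and n: "0 \<le> n" "(real_of_int n + 1) * h \<le> T"
    and uc: "\<And>u v. u \<in> {-1..T} \<Longrightarrow> v \<in> {-1..T} \<Longrightarrow> \<bar>u - v\<bar> < \<delta> \<Longrightarrow> \<bar>x u - x v\<bar> < \<eta>"
    and h\<delta>: "2 * h < \<delta>"
  shows "\<bar>x ((real_of_int n + 1) * h) - x (real_of_int n * h)
      + dcoef h n * x (real_of_int (n - ddelay h n) * h)\<bar> \<le> 4 / 3 * \<eta> * h"
proof -
  define c where "c = x (real_of_int (n - ddelay h n) * h)"
  have nh: "0 \<le> real_of_int n * h" using n h by simp
  have "real_of_int (n - ddelay h n) * h = real_of_int n * h - real_of_int (ddelay h n) * h"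
    by (simp add: algebra_simps)
  then have delayed_lo: "- 1 \<le> real_of_int (n - ddelay h n) * h"
    using ddelay_bounds(2)[OF h, of n] abs_cos_le_one[of "real_of_int n * h"] nh by linarith
  have delayed_hi: "real_of_int (n - ddelay h n) * h \<le> T"
  proof -
    have "0 \<le> real_of_int (ddelay h n) * h" using ddelay_bounds(1)[OF h, of n] h by simp
    moreover have "(real_of_int n + 1) * h = real_of_int n * h + h" by (simp add: algebra_simps)
    ultimately show ?thesis using \<open>real_of_int (n - ddelay h n) * h = _\<close> n(2) h by linarith
  qed
  have "\<bar>x (s - \<bar>cos s\<bar>) - c\<bar> \<le> \<eta>"
    if "real_of_int n * h \<le> s" "s \<le> (real_of_int n + 1) * h" for s
  proof -
    have "- 1 \<le> s - \<bar>cos s\<bar>" "s - \<bar>cos s\<bar> \<le> T"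
      using abs_cos_le_one[of s] nh n(2) that by linarith+
    then show ?thesis
      using delayed_argument_close[OF h that] h\<delta> delayed_lo delayed_hi unfolding c_def
      by (intro less_imp_le uc) auto
  qed
  then have "\<bar>x ((real_of_int n + 1) * h) - x (real_of_int n * h)
      + c * (coef_antideriv ((real_of_int n + 1) * h) - coef_antideriv (real_of_int n * h))\<bar>
      \<le> 4 / 3 * \<eta> * ((real_of_int n + 1) * h - real_of_int n * h)"
    using nh h by (intro dde_increment_estimate[OF sol]) auto
  then show ?thesis
    unfolding dcoef_eq_antideriv_diff c_def by (simp add: algebra_simps)
qed

lemma discrete_delay_gronwall:
  fixes e :: "int \<Rightarrow> real" and r :: "int \<Rightarrow> int"
  assumes init: "\<And>j. - K \<le> j \<Longrightarrow> j \<le> 0 \<Longrightarrow> e j = 0"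
    and delayed: "\<And>n. 0 \<le> n \<Longrightarrow> - K \<le> r n \<and> r n \<le> n"
    and step: "\<And>n. 0 \<le> n \<Longrightarrow> n < N \<Longrightarrow> \<bar>e (n + 1)\<bar> \<le> \<bar>e n\<bar> + b * \<bar>e (r n)\<bar> + c"
    and bc: "0 \<le> b" "0 \<le> c"
  shows "int p \<le> N \<Longrightarrow> - K \<le> j \<Longrightarrow> j \<le> int p \<Longrightarrow> \<bar>e j\<bar> \<le> real p * c * (1 + b) ^ p"
proof (induction p arbitrary: j)
  case 0
  then show ?case using init by simp
next
  case (Suc p)
  have IH: "\<bar>e i\<bar> \<le> real p * c * (1 + b) ^ p" if "- K \<le> i" "i \<le> int p" for i
    using Suc.IH Suc.prems(1) that by simp
  have grow: "real p * c * (1 + b) ^ p \<le> real (Suc p) * c * (1 + b) ^ Suc p"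
    using bc by (intro mult_mono power_increasing) auto
  show ?case
  proof (cases "j \<le> int p")
    case True
    then show ?thesis using IH[of j] Suc.prems grow by simp
  next
    case False
    then have j: "j = int p + 1" using Suc.prems by simp
    have "\<bar>e (int p + 1)\<bar> \<le> \<bar>e (int p)\<bar> + b * \<bar>e (r (int p))\<bar> + c"
      using Suc.prems by (intro step) auto
    also have "\<dots> \<le> real p * c * (1 + b) ^ p + b * (real p * c * (1 + b) ^ p) + c"
      using IH[of "int p"] IH[of "r (int p)"] delayed[of "int p"] Suc.prems bc
      by (intro add_mono mult_left_mono) auto
    also have "\<dots> = real p * c * (1 + b) ^ Suc p + c" by (simp add: algebra_simps)
    also have "\<dots> \<le> real (Suc p) * c * (1 + b) ^ Suc p"
      using mult_left_mono[OF one_le_power[of "1 + b" "Suc p"] bc(2)] bc by (simp add: algebra_simps)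
    finally show ?thesis unfolding j .
  qed
qed

lemma discretization_error_step:
  assumes sol: "dde_sol \<phi> x" and h: "0 < h"
    and z: "z (n + 1) = z n - dcoef h n * z (n - ddelay h n)"
    and n: "0 \<le> n" "(real_of_int n + 1) * h \<le> T"
    and uc: "\<And>u v. u \<in> {-1..T} \<Longrightarrow> v \<in> {-1..T} \<Longrightarrow> \<bar>u - v\<bar> < \<delta> \<Longrightarrow> \<bar>x u - x v\<bar> < \<eta>"
    and h\<delta>: "2 * h < \<delta>"
  defines "e \<equiv> \<lambda>j. x (real_of_int j * h) - z j"
  shows "\<bar>e (n + 1)\<bar> \<le> \<bar>e n\<bar> + 4 / 3 * h * \<bar>e (n - ddelay h n)\<bar> + 4 / 3 * \<eta> * h"
proof -
  define A where "A = dcoef h n"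
  define m where "m = n - ddelay h n"
  have A: "0 \<le> A" "A \<le> 4 / 3 * h"
    using dcoef_bounds[of h n] h unfolding A_def by simp_all
  have "\<bar>x ((real_of_int n + 1) * h) - x (real_of_int n * h) + A * x (real_of_int m * h)\<bar>
      \<le> 4 / 3 * \<eta> * h"
    unfolding A_def m_def by (rule dde_one_step_residual[OF sol h n uc h\<delta>])
  moreover have "e (n + 1) = (x ((real_of_int n + 1) * h) - x (real_of_int n * h) + A * x (real_of_int m * h))
      + e n - A * e m"
    using z unfolding e_def A_def m_def by (simp add: algebra_simps)
  moreover have "\<bar>A * e m\<bar> \<le> 4 / 3 * h * \<bar>e m\<bar>"
    using mult_right_mono[OF A(2), of "\<bar>e m\<bar>"] A(1) by (simp add: abs_mult)
  ultimately show ?thesis unfolding m_def by linarith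
qed

lemma grid_error_bound:
  assumes sol: "dde_sol \<phi> x" and k: "1 \<le> k" and z: "dsol k 0 z"
    and init: "\<forall>j\<in>{- int k..0}. z j = \<phi> (real_of_int j / real k)"
    and uc: "\<And>u v. u \<in> {-1..T} \<Longrightarrow> v \<in> {-1..T} \<Longrightarrow> \<bar>u - v\<bar> < \<delta> \<Longrightarrow> \<bar>x u - x v\<bar> < \<eta>"
    and k\<delta>: "2 / real k < \<delta>" and p: "real p / real k \<le> T"
  shows "\<bar>x (real p / real k) - z (int p)\<bar> \<le> 4 / 3 * \<eta> * T * exp (4 / 3 * T)"
proof -
  define h where "h = 1 / real k"
  have h: "0 < h" using k by (simp add: h_def)
  have T: "0 \<le> T" using p by (rule order_trans[rotated]) simp
  have "0 < \<delta>" using k\<delta> divide_nonneg_nonneg[of 2 "real k"] by linarith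
  then have \<eta>: "0 \<le> \<eta>" using uc[of 0 0] T by simp
  define e where "e j = x (real_of_int j * h) - z j" for j
  have "\<bar>e (int p)\<bar> \<le> real p * (4 / 3 * \<eta> * h) * (1 + 4 / 3 * h) ^ p"
  proof (rule discrete_delay_gronwall)
    fix j :: int assume "- int k \<le> j" "j \<le> 0"
    moreover from this have "- 1 \<le> real_of_int j * h" "real_of_int j * h \<le> 0"
      using k by (simp_all add: h_def field_simps)
    ultimately show "e j = 0"
      using sol init unfolding dde_sol_def e_def h_def by auto
  next
    fix n :: int assume "0 \<le> n"
    then show "- int k \<le> n - ddelay h n \<and> n - ddelay h n \<le> n"
      using ddelay_bounds(1)[OF h, of n] ddelay_le_steps[OF k, of n] unfolding h_def by linarith
  next
    fix n :: int assume n: "0 \<le> n" "n < int p"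
    have "(real_of_int n + 1) * h \<le> real p * h"
      using n h by (intro mult_right_mono) linarith+
    then show "\<bar>e (n + 1)\<bar> \<le> \<bar>e n\<bar> + 4 / 3 * h * \<bar>e (n - ddelay h n)\<bar> + 4 / 3 * \<eta> * h"
      using z n p k\<delta> k unfolding e_def dsol_def h_def
      by (intro discretization_error_step[OF sol _ _ _ _ uc]) simp_all
  qed (use h \<eta> in auto)
  also have "\<dots> \<le> 4 / 3 * \<eta> * T * exp (4 / 3 * T)"
  proof -
    have ph: "real p * h \<le> T" using p unfolding h_def by simp
    have "(1 + 4 / 3 * h) ^ p \<le> exp (4 / 3 * h) ^ p"
      using h by (intro power_mono) auto
    also have "\<dots> = exp (4 / 3 * (real p * h))" by (simp add: exp_of_nat_mult[symmetric] ac_simps)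
    also have "\<dots> \<le> exp (4 / 3 * T)" using ph by (simp add: mult.commute)
    finally have growth: "(1 + 4 / 3 * h) ^ p \<le> exp (4 / 3 * T)" .
    have "real p * (4 / 3 * \<eta> * h) \<le> 4 / 3 * \<eta> * T"
      using mult_left_mono[OF ph, of "4 / 3 * \<eta>"] \<eta> by (simp add: ac_simps)
    then show ?thesis by (rule mult_mono[OF _ growth]) (use \<eta> T h in simp_all)
  qed
  finally show ?thesis unfolding e_def h_def by simp
qed

lemma grid_point_below:
  assumes t: "0 \<le> t" and k: "1 \<le> k"
  obtains p :: nat where "\<lfloor>t / (1 / real k)\<rfloor> = int p"
    and "real p / real k \<le> t" and "t - real p / real k < 1 / real k"
proof
  define p where "p = nat \<lfloor>t * real k\<rfloor>"
  show "\<lfloor>t / (1 / real k)\<rfloor> = int p" using t unfolding p_def by simp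
  have "0 \<le> t * real k" using t by simp
  then have "real p \<le> t * real k" "t * real k < real p + 1" unfolding p_def by linarith+
  then show "real p / real k \<le> t" using k by (simp add: field_simps)
  have "t - real p / real k = (t * real k - real p) / real k" using k by (simp add: field_simps)
  also have "\<dots> < 1 / real k"
    using \<open>t * real k < real p + 1\<close> k by (intro divide_strict_right_mono) auto
  finally show "t - real p / real k < 1 / real k" .
qed

lemma grid_approximation_error:
  assumes sol: "dde_sol \<phi> x" and k: "1 \<le> k" and z: "dsol k 0 z"
    and init: "\<forall>j\<in>{- int k..0}. z j = \<phi> (real_of_int j / real k)"
    and uc: "\<And>u v. u \<in> {-1..t} \<Longrightarrow> v \<in> {-1..t} \<Longrightarrow> \<bar>u - v\<bar> < \<delta> \<Longrightarrow> \<bar>x u - x v\<bar> < \<eta>"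
    and k\<delta>: "2 / real k < \<delta>" and t: "0 \<le> t"
  shows "\<bar>x t - z \<lfloor>t / (1 / real k)\<rfloor>\<bar> < (4 / 3 * t * exp (4 / 3 * t) + 1) * \<eta>"
proof -
  obtain p where fl: "\<lfloor>t / (1 / real k)\<rfloor> = int p"
    and pt: "real p / real k \<le> t" and gap: "t - real p / real k < 1 / real k"
    using grid_point_below[OF t k] by blast
  have "1 / real k < \<delta>" using k\<delta> k by (simp add: field_simps)
  moreover have "0 \<le> real p / real k" by simp
  then have "- 1 \<le> real p / real k" by linarith
  ultimately have "\<bar>x t - x (real p / real k)\<bar> < \<eta>"
    using pt gap t by (intro uc) auto
  moreover have "\<bar>x (real p / real k) - z (int p)\<bar> \<le> 4 / 3 * t * exp (4 / 3 * t) * \<eta>"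
    using grid_error_bound[OF sol k z init uc k\<delta> pt] by (simp add: ac_simps)
  moreover have "\<bar>x t - z (int p)\<bar> \<le> \<bar>x t - x (real p / real k)\<bar> + \<bar>x (real p / real k) - z (int p)\<bar>"
    using abs_triangle_ineq[of "x t - x (real p / real k)" "x (real p / real k) - z (int p)"] by simp
  ultimately show ?thesis unfolding fl by (simp add: distrib_right)
qed

lemma dde_discretization_converges:
  assumes sol: "dde_sol \<phi> x"
    and z: "\<forall>k\<ge>1. dsol k 0 (\<zeta> k) \<and> (\<forall>j\<in>{- int k..0}. \<zeta> k j = \<phi> (real_of_int j / real k))"
    and t: "0 < t"
  shows "(\<lambda>k. \<bar>x t - \<zeta> k \<lfloor>t / (1 / real k)\<rfloor>\<bar>) \<longlonglongrightarrow> 0"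
proof (rule LIMSEQ_I)
  fix \<epsilon> :: real assume \<epsilon>: "0 < \<epsilon>"
  define C where "C = 4 / 3 * t * exp (4 / 3 * t) + 1"
  have C: "0 < C" using t by (simp add: C_def add_nonneg_pos)
  have "continuous_on {-1..t} x"
    using sol unfolding dde_sol_def by (auto intro: continuous_on_subset)
  then have "uniformly_continuous_on {-1..t} x"
    by (rule compact_uniformly_continuous) simp
  then obtain \<delta> where \<delta>: "0 < \<delta>"
    and uc: "\<And>u v. u \<in> {-1..t} \<Longrightarrow> v \<in> {-1..t} \<Longrightarrow> \<bar>u - v\<bar> < \<delta> \<Longrightarrow> \<bar>x u - x v\<bar> < \<epsilon> / C"
    using \<epsilon> C unfolding uniformly_continuous_on_def dist_real_def by (metis divide_pos_pos)
  obtain N :: nat where N: "2 / \<delta> < real N" using reals_Archimedean2 by blast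
  show "\<exists>N. \<forall>k\<ge>N. norm (\<bar>x t - \<zeta> k \<lfloor>t / (1 / real k)\<rfloor>\<bar> - 0) < \<epsilon>"
  proof (intro exI[of _ N] allI impI)
    fix k assume "N \<le> k"
    then have "2 / \<delta> < real k" using N by linarith
    moreover have "0 < 2 / \<delta>" using \<delta> by simp
    ultimately have "0 < real k" by linarith
    then have k: "1 \<le> k" and k\<delta>: "2 / real k < \<delta>"
      using \<open>2 / \<delta> < real k\<close> \<delta> by (simp_all add: field_simps)
    have "dsol k 0 (\<zeta> k)" "\<forall>j\<in>{- int k..0}. \<zeta> k j = \<phi> (real_of_int j / real k)"
      using z k by simp_all
    then have "\<bar>x t - \<zeta> k \<lfloor>t / (1 / real k)\<rfloor>\<bar> < (4 / 3 * t * exp (4 / 3 * t) + 1) * (\<epsilon> / C)"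
      by (rule grid_approximation_error[OF sol k _ _ uc k\<delta> less_imp_le[OF t]])
    then show "norm (\<bar>x t - \<zeta> k \<lfloor>t / (1 / real k)\<rfloor>\<bar> - 0) < \<epsilon>"
      using C unfolding C_def[symmetric] by simp
  qed
qed

theorem mainTheorem6:
  shows "(\<exists>K::nat. \<forall>k\<ge>K. k \<ge> 1 \<longrightarrow> unif_asymp_stable k) \<and>
    (\<forall>(\<phi>::real \<Rightarrow> real) x (\<zeta>::nat \<Rightarrow> int \<Rightarrow> real).
       continuous_on {-1..0} \<phi> \<longrightarrow> dde_sol \<phi> x \<longrightarrow>
       (\<forall>k\<ge>1. dsol k 0 (\<zeta> k) \<and> (\<forall>j\<in>{- int k..0}. \<zeta> k j = \<phi> (real_of_int j / real k))) \<longrightarrow>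
       (\<forall>t>0. (\<lambda>k. \<bar>x t - \<zeta> k \<lfloor>t / (1 / real k)\<rfloor>\<bar>) \<longlonglongrightarrow> 0))"
  (* ) *)
  using unif_asymp_stable_discretization dde_discretization_converges by blast

end
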